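(* Let $X$, $Z$ be topological vector spaces, $C\subseteq Z$ a nonempty closed convex cone with $C^-\neq\{0\}$, and $f:X\to\mathcal{F}(Z,C)$. If $f$ is Hausdorff upper continuous at $x_0\in X$, then $f$ is lower lattice-semicontinuous at $x_0$.
   Context: $\mathcal{F}(Z,C)=\{A\subseteq Z\colon A=\operatorname{cl}(A+C)\}$ (empty set included); $C^-=\{z^*\in Z^*\colon z^*(z)\le0\ \forall z\in C\}$. $f$ is Hausdorff upper continuous at $x_0$ iff for every neighborhood $V$ of $0$ in $Z$ there is a neighborhood $U$ of $x_0$ with $f(x)\subseteq f(x_0)+V$ for all $x\in U$. $f$ is lower lattice-semicontinuous at $x_0$ iff $f(x_0)\supseteq\bigcap_{U\in\mathcal{N}(x_0)}\operatorname{cl}\bigcup_{x\in U}f(x)$ ($\mathcal{N}(x_0)$ the neighborhoods of $x_0$); equivalently, for every $z_0\notin f(x_0)$ there exist a neighborhood $U$ of $x_0$ and a neighborhood $V$ of $z_0$ with $z\notin f(x)$ for all $x\in U$, $z\in V$. *)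

theory Defs
  imports "HOL-Analysis.Analysis"
begin

text \<open>Real topological vector spaces (not necessarily Hausdorff): a real vector space with a
  topology making addition, negation (topological abelian group) and scalar multiplication
  (jointly, i.e. w.r.t. the product filter of neighbourhoods, which is the neighbourhood
  filter of the product topology) continuous.\<close>
class topological_real_vector = real_vector + topological_ab_group_add +
  assumes tendsto_scaleR_joint:
    "\<And>(c::real) (x::'a). filterlim (\<lambda>(b, y). b *\<^sub>R y) (nhds (c *\<^sub>R x)) (nhds c \<times>\<^sub>F nhds x)"

definition nbhds :: "'a::topological_space \<Rightarrow> 'a set set" where
  "nbhds x = {N. \<exists>W. open W \<and> x \<in> W \<and> W \<subseteq> N}"

definition msum :: "'a::real_vector set \<Rightarrow> 'a set \<Rightarrow> 'a set" where
  "msum A B = {a + b | a b. a \<in> A \<and> b \<in> B}"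

text \<open>The family F(Z,C) of C-upper closed sets (empty set included).\<close>
definition upper_closed_sets :: "'a::topological_real_vector set \<Rightarrow> 'a set set" where
  "upper_closed_sets C = {A. A = closure (msum A C)}"

definition neg_dual_cone :: "'a::topological_real_vector set \<Rightarrow> ('a \<Rightarrow> real) set" where
  "neg_dual_cone C = {g. linear g \<and> continuous_on UNIV g \<and> (\<forall>z\<in>C. g z \<le> 0)}"

definition hausdorff_upper_continuous_at ::
  "('x::topological_space \<Rightarrow> 'z::topological_real_vector set) \<Rightarrow> 'x \<Rightarrow> bool" where
  "hausdorff_upper_continuous_at f x0 \<longleftrightarrow>
     (\<forall>V\<in>nbhds (0::'z). \<exists>U\<in>nbhds x0. \<forall>x\<in>U. f x \<subseteq> msum (f x0) V)"

definition lower_lattice_semicontinuous_at ::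
  "('x::topological_space \<Rightarrow> 'z::topological_space set) \<Rightarrow> 'x \<Rightarrow> bool" where
  "lower_lattice_semicontinuous_at f x0 \<longleftrightarrow>
     (\<Inter>U\<in>nbhds x0. closure (\<Union>x\<in>U. f x)) \<subseteq> f x0"

end

theory Submission
  imports Defs
begin

text \<open>Only the closedness of \<open>f x0\<close> matters. A point \<open>z0\<close> outside the closed set \<open>f x0\<close>
  has a neighbourhood \<open>W\<close> disjoint from \<open>f x0 + V\<close> for some neighbourhood \<open>V\<close> of \<open>0\<close>; by Hausdorff
  upper continuity all \<open>f x\<close> with \<open>x\<close> near \<open>x0\<close> lie in \<open>f x0 + V\<close>, hence miss \<open>W\<close>, so \<open>z0\<close> is
  not in the closure of their union.\<close>

lemma closed_upper_closed_set:
  assumes "A \<in> upper_closed_sets C"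
  shows "closed A"
proof -
  have "A = closure (msum A C)"
    using assms by (simp add: upper_closed_sets_def)
  then show ?thesis
    by (metis closed_closure)
qed

lemma closed_separate_msum_nhd:
  fixes A :: "'z::{real_vector, topological_ab_group_add} set"
  assumes "closed A" and "z0 \<notin> A"
  obtains V W where "open V" "0 \<in> V" "open W" "z0 \<in> W" "msum A V \<inter> W = {}"
proof -
  have "(fst \<longlongrightarrow> 0) (nhds (0::'z, 0::'z))" "(snd \<longlongrightarrow> 0) (nhds (0::'z, 0::'z))"
    using tendsto_fst[OF filterlim_ident, of "(0, 0)"] tendsto_snd[OF filterlim_ident, of "(0, 0)"]
    by simp_all
  then have "((\<lambda>p. z0 + snd p - fst p) \<longlongrightarrow> z0 + 0 - 0) (nhds 0 \<times>\<^sub>F nhds (0::'z))"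
    unfolding nhds_prod[symmetric] by (intro tendsto_intros)
  then have "eventually (\<lambda>p. z0 + snd p - fst p \<in> - A) (nhds 0 \<times>\<^sub>F nhds (0::'z))"
    using assms by (intro topological_tendstoD) (auto simp: open_Compl)
  then obtain P Q where "eventually P (nhds (0::'z))" "eventually Q (nhds (0::'z))"
    and PQ: "\<And>v w. P v \<Longrightarrow> Q w \<Longrightarrow> z0 + w - v \<notin> A"
    unfolding eventually_prod_filter by force
  obtain V1 where V1: "open V1" "0 \<in> V1" "\<forall>v\<in>V1. P v"
    using \<open>eventually P (nhds 0)\<close> unfolding eventually_nhds by blast
  obtain V2 where V2: "open V2" "0 \<in> V2" "\<forall>w\<in>V2. Q w"
    using \<open>eventually Q (nhds 0)\<close> unfolding eventually_nhds by blast
  let ?W = "(\<lambda>z. z - z0) -` V2"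
  have "open ?W"
    by (intro open_vimage[OF V2(1)] continuous_intros)
  moreover have "msum A V1 \<inter> ?W = {}"
  proof (rule ccontr)
    assume "msum A V1 \<inter> ?W \<noteq> {}"
    then obtain a v where a: "a \<in> A" "v \<in> V1" "a + v - z0 \<in> V2"
      unfolding msum_def by blast
    with PQ V1(3) V2(3) have "z0 + (a + v - z0) - v \<notin> A" by blast
    with a(1) show False by (simp add: algebra_simps)
  qed
  ultimately show thesis
    using that V1(1,2) V2(2) by auto
qed

lemma lower_lattice_semicontinuous_atI:
  assumes "\<And>z0. z0 \<notin> f x0 \<Longrightarrow>
    \<exists>U\<in>nbhds x0. \<exists>W. open W \<and> z0 \<in> W \<and> (\<forall>x\<in>U. f x \<inter> W = {})"
  shows "lower_lattice_semicontinuous_at f x0"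
  unfolding lower_lattice_semicontinuous_at_def
proof
  fix z0 assume z0: "z0 \<in> (\<Inter>U\<in>nbhds x0. closure (\<Union>x\<in>U. f x))"
  show "z0 \<in> f x0"
  proof (rule ccontr)
    assume "z0 \<notin> f x0"
    then obtain U W where U: "U \<in> nbhds x0" and W: "open W" "z0 \<in> W"
      and disj: "\<forall>x\<in>U. f x \<inter> W = {}"
      using assms[OF \<open>z0 \<notin> f x0\<close>] by (elim bexE exE conjE) blast
    have "W \<inter> (\<Union>x\<in>U. f x) = {}"
      using disj by blast
    then have "W \<inter> closure (\<Union>x\<in>U. f x) = {}"
      by (simp add: open_Int_closure_eq_empty[OF W(1)])
    moreover have "z0 \<in> closure (\<Union>x\<in>U. f x)"
      using INT_D[OF z0 U] .
    ultimately show False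
      using W(2) by blast
  qed
qed

lemma hausdorff_upper_continuous_imp_lower_lattice_semicontinuous:
  fixes f :: "'x::topological_space \<Rightarrow> 'z::topological_real_vector set"
  assumes "closed (f x0)" and "hausdorff_upper_continuous_at f x0"
  shows "lower_lattice_semicontinuous_at f x0"
proof (rule lower_lattice_semicontinuous_atI)
  fix z0 assume "z0 \<notin> f x0"
  then obtain V W where V: "open V" "0 \<in> V" and W: "open W" "z0 \<in> W"
    and disj: "msum (f x0) V \<inter> W = {}"
    by (rule closed_separate_msum_nhd[OF assms(1)])
  have "V \<in> nbhds 0"
    using V unfolding nbhds_def by auto
  then obtain U where "U \<in> nbhds x0" and "\<forall>x\<in>U. f x \<subseteq> msum (f x0) V"
    using assms(2) unfolding hausdorff_upper_continuous_at_def by blast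
  with W disj show "\<exists>U\<in>nbhds x0. \<exists>W. open W \<and> z0 \<in> W \<and> (\<forall>x\<in>U. f x \<inter> W = {})"
    by (intro bexI[of _ U] exI[of _ W]) auto
qed

theorem mainTheorem10:
  fixes f :: "'x::topological_real_vector \<Rightarrow> 'z::topological_real_vector set"
    and C :: "'z set" and x0 :: 'x
  assumes "C \<noteq> {}" and "closed C" and "convex C" and "cone C"
    and "neg_dual_cone C \<noteq> {(\<lambda>_. 0)}"
    and "\<forall>x. f x \<in> upper_closed_sets C"
    and "hausdorff_upper_continuous_at f x0"
  shows "lower_lattice_semicontinuous_at f x0"
  using closed_upper_closed_set[OF spec[OF assms(6)]] assms(7)
  by (rule hausdorff_upper_continuous_imp_lower_lattice_semicontinuous)

end
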